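(* Let $M\in\mathcal{G}$ be such that $C_M$ and $C_{M^{-1}}$ are invertible, and set $Z_M=C_M^{-1}D_M$, $Z_{M^{-1}}=C_{M^{-1}}^{-1}D_{M^{-1}}$. Then $$Z_M=(\mathbb{1}+\Delta_{M^{-1}})^{-1}(\mathbb{1}-\Delta_{M^{-1}}),\qquad Z_MJ=-JZ_M,\qquad M=C_M(\mathbb{1}+Z_M),$$ $$\mathbb{1}=C_{M^{-1}}C_M(\mathbb{1}-Z_M^2),\qquad Z_{M^{-1}}C_M=-C_MZ_M,$$ where $\Delta_{M}=-MJM^{-1}J$.
   Context: Either bosonic case ($\mathcal{G}=\mathrm{Sp}(2N,\mathbb{R})$ preserving $\Omega=\begin{pmatrix}0&\mathbb{1}\\-\mathbb{1}&0\end{pmatrix}$, $J^2=-\mathbb{1}$, $J\Omega J^\intercal=\Omega$, $-J\Omega>0$) or fermionic case ($\mathcal{G}=\mathrm{SO}(2N,\mathbb{R})$, $J$ orthogonal with $J^2=-\mathbb{1}$). For a real linear map $M$ of $\mathbb{R}^{2N}$: $C_M=\frac12(M-JMJ)$ (the part commuting with $J$) and $D_M=\frac12(M+JMJ)$ (the part anticommuting with $J$). *)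

theory Defs
  imports "HOL-Analysis.Analysis"
begin

text \<open>Phase space R^(2N) is modelled with index type 'n + 'n (positions Inl i, momenta Inr i),
  so that N = CARD('n) is arbitrary (N \<ge> 1).\<close>

definition Omega :: "real ^ ('n::finite + 'n) ^ ('n + 'n)" where
  "Omega = (\<chi> i j. (case (i, j) of
      (Inl a, Inr b) \<Rightarrow> (if a = b then 1 else 0)
    | (Inr a, Inl b) \<Rightarrow> (if a = b then -1 else 0)
    | _ \<Rightarrow> 0))"

definition symplectic :: "real ^ ('n::finite + 'n) ^ ('n + 'n) \<Rightarrow> bool" where
  "symplectic M \<longleftrightarrow> M ** Omega ** transpose M = Omega"

definition bosonic_J :: "real ^ ('n::finite + 'n) ^ ('n + 'n) \<Rightarrow> bool" where
  "bosonic_J J \<longleftrightarrow> J ** J = - mat 1 \<and> J ** Omega ** transpose J = Omega \<and>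
     transpose (- (J ** Omega)) = - (J ** Omega) \<and>
     (\<forall>x. x \<noteq> 0 \<longrightarrow> x \<bullet> ((- (J ** Omega)) *v x) > 0)"

definition special_orthogonal :: "real ^ ('n::finite + 'n) ^ ('n + 'n) \<Rightarrow> bool" where
  "special_orthogonal M \<longleftrightarrow> orthogonal_matrix M \<and> det M = 1"

definition fermionic_J :: "real ^ ('n::finite + 'n) ^ ('n + 'n) \<Rightarrow> bool" where
  "fermionic_J J \<longleftrightarrow> orthogonal_matrix J \<and> J ** J = - mat 1"

text \<open>C_M: part commuting with J; D_M: part anticommuting with J.\<close>
definition Cpart :: "real ^ 'm ^ 'm \<Rightarrow> real ^ 'm ^ 'm \<Rightarrow> real ^ 'm ^ 'm" where
  "Cpart J M = (1/2) *\<^sub>R (M - J ** M ** J)"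

definition Dpart :: "real ^ 'm ^ 'm \<Rightarrow> real ^ 'm ^ 'm \<Rightarrow> real ^ 'm ^ 'm" where
  "Dpart J M = (1/2) *\<^sub>R (M + J ** M ** J)"

definition Zmat :: "real ^ 'm ^ 'm \<Rightarrow> real ^ 'm ^ 'm \<Rightarrow> real ^ 'm ^ 'm" where
  "Zmat J M = matrix_inv (Cpart J M) ** Dpart J M"

definition Delta :: "real ^ 'm ^ 'm \<Rightarrow> real ^ 'm ^ 'm \<Rightarrow> real ^ 'm ^ 'm" where
  "Delta J M = - (M ** J ** matrix_inv M ** J)"

end

theory Submission
  imports Defs
begin

text \<open>Splitting a matrix into its part C commuting with J and its part D anticommuting with J
  behaves like a block decomposition: C(NM) = C(N) C(M) + D(N) D(M) and
  D(NM) = C(N) D(M) + D(N) C(M). For N the inverse of M the left-hand sides are 1 and 0, and all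
  identities follow from these two relations together with 1 + \<Delta>(N) = 2 N C(M) and
  1 - \<Delta>(N) = 2 N D(M). The group structure is only needed to know that M is invertible and
  that J squares to -1.\<close>

lemma matrix_add_rdistrib: "((A::'a::semiring_1^'n^'m) + B) ** C = A ** C + B ** C"
  by (simp add: matrix_matrix_mult_def vec_eq_iff sum.distrib distrib_right)

lemma matrix_diff_ldistrib: "(A::'a::ring_1^'n^'m) ** (B - C) = A ** B - A ** C"
  by (simp add: matrix_matrix_mult_def vec_eq_iff sum_subtractf right_diff_distrib)

lemma matrix_diff_rdistrib: "((A::'a::ring_1^'n^'m) - B) ** C = A ** C - B ** C"
  by (simp add: matrix_matrix_mult_def vec_eq_iff sum_subtractf left_diff_distrib)

lemma matrix_neg_left: "(- (A::'a::ring_1^'n^'m)) ** B = - (A ** B)"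
  by (simp add: matrix_matrix_mult_def vec_eq_iff sum_negf)

lemma matrix_neg_right: "(A::'a::ring_1^'n^'m) ** (- B) = - (A ** B)"
  by (simp add: matrix_matrix_mult_def vec_eq_iff sum_negf)

lemma matrix_scaleR_right: "(A::'a::real_algebra_1^'n^'m) ** (k *\<^sub>R B) = k *\<^sub>R (A ** B)"
  by (simp add: matrix_scalar_ac scalar_matrix_assoc)

text \<open>On matrices, \<open>*\<close> is the componentwise product; \<open>algebra_simps\<close> produces \<open>A * 2\<close>
  from \<open>A + A\<close>, which this turns back into a scalar multiple.\<close>
lemma vec_mult_numeral: "(A::real^'n^'m) * numeral k = numeral k *\<^sub>R A"
  by (simp add: vec_eq_iff)

lemmas matrix_ring_simps = matrix_mul_assoc[symmetric] matrix_add_ldistrib matrix_add_rdistrib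
  matrix_diff_ldistrib matrix_diff_rdistrib matrix_neg_left matrix_neg_right
  scalar_matrix_assoc[symmetric] matrix_scaleR_right vec_mult_numeral

lemma matrix_inv_left: "invertible A \<Longrightarrow> matrix_inv A ** A = mat 1"
  unfolding matrix_inv_def invertible_def by (rule someI2_ex) auto

lemma matrix_inv_right: "invertible A \<Longrightarrow> A ** matrix_inv A = mat 1"
  unfolding matrix_inv_def invertible_def by (rule someI2_ex) auto

lemma matrix_inv_unique:
  fixes A B :: "'a::field^'n^'n"
  assumes "A ** B = mat 1"
  shows "matrix_inv A = B"
proof -
  have "invertible A"
    using assms invertible_right_inverse by blast
  then have "matrix_inv A = matrix_inv A ** (A ** B)"
    by (simp add: assms)
  also have "\<dots> = B"
    by (simp add: matrix_mul_assoc matrix_inv_left \<open>invertible A\<close>)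
  finally show ?thesis .
qed

lemma matrix_inv_inv:
  fixes A :: "'a::field^'n^'n"
  shows "invertible A \<Longrightarrow> matrix_inv (matrix_inv A) = A"
  by (simp add: matrix_inv_unique matrix_inv_left)

lemma invertible_matrix_inv:
  fixes A :: "'a::field^'n^'n"
  shows "invertible A \<Longrightarrow> invertible (matrix_inv A)"
  using invertible_right_inverse matrix_inv_left by blast

lemma matrix_inv_mult:
  fixes A B :: "'a::field^'n^'n"
  assumes "invertible A" and "invertible B"
  shows "matrix_inv (A ** B) = matrix_inv B ** matrix_inv A"
proof (rule matrix_inv_unique)
  have "A ** B ** (matrix_inv B ** matrix_inv A) = A ** (B ** matrix_inv B) ** matrix_inv A"
    by (simp add: matrix_mul_assoc)
  then show "A ** B ** (matrix_inv B ** matrix_inv A) = mat 1"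
    by (simp add: assms matrix_inv_right)
qed

lemma matrix_inv_scaleR:
  fixes A :: "real^'n^'n"
  assumes "k \<noteq> 0" and "invertible A"
  shows "matrix_inv (k *\<^sub>R A) = inverse k *\<^sub>R matrix_inv A"
  by (rule matrix_inv_unique)
    (simp add: assms matrix_scaleR_right scalar_matrix_assoc[symmetric] matrix_inv_right)

lemma matrix_inv_commute:
  fixes A J :: "'a::field^'n^'n"
  assumes "invertible A" and "A ** J = J ** A"
  shows "matrix_inv A ** J = J ** matrix_inv A"
proof -
  have "matrix_inv A ** J = matrix_inv A ** J ** (A ** matrix_inv A)"
    by (simp add: assms(1) matrix_inv_right)
  also have "\<dots> = matrix_inv A ** (J ** A) ** matrix_inv A"
    by (simp add: matrix_mul_assoc)
  also have "\<dots> = matrix_inv A ** (A ** J) ** matrix_inv A"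
    by (simp add: assms(2))
  also have "\<dots> = J ** matrix_inv A"
    by (simp add: assms(1) matrix_inv_left matrix_mul_assoc)
  finally show ?thesis .
qed

lemma Cpart_add_Dpart: "Cpart J M + Dpart J M = M"
proof -
  have "Cpart J M + Dpart J M = (1/2 + 1/2) *\<^sub>R M"
    unfolding Cpart_def Dpart_def scaleR_left_distrib by (simp add: algebra_simps)
  then show ?thesis
    by simp
qed

lemma Cpart_mult_one_add_Zmat:
  "invertible (Cpart J M) \<Longrightarrow> Cpart J M ** (mat 1 + Zmat J M) = M"
  by (simp add: Zmat_def matrix_add_ldistrib matrix_mul_assoc matrix_inv_right Cpart_add_Dpart)

context
  fixes J :: "real^'m^'m"
  assumes J_square: "J ** J = - mat 1"
begin

private lemma J_square_left: "J ** (J ** A) = - A"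
  by (simp add: matrix_mul_assoc J_square matrix_neg_left)

private lemmas J_simps = matrix_ring_simps J_square J_square_left

lemma Cpart_commute: "Cpart J M ** J = J ** Cpart J M"
  by (simp add: Cpart_def J_simps algebra_simps)

lemma Dpart_anticommute: "Dpart J M ** J = - (J ** Dpart J M)"
  by (simp add: Dpart_def J_simps algebra_simps)

lemma Cpart_mult: "Cpart J (N ** M) = Cpart J N ** Cpart J M + Dpart J N ** Dpart J M"
  by (simp add: Cpart_def Dpart_def J_simps algebra_simps)

lemma Dpart_mult: "Dpart J (N ** M) = Cpart J N ** Dpart J M + Dpart J N ** Cpart J M"
  by (simp add: Cpart_def Dpart_def J_simps algebra_simps)

lemma Cpart_mat_1: "Cpart J (mat 1) = mat 1"
  by (simp add: Cpart_def J_square)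

lemma Dpart_mat_1: "Dpart J (mat 1) = 0"
  by (simp add: Dpart_def J_square)

lemma Zmat_anticommute:
  assumes "invertible (Cpart J M)"
  shows "Zmat J M ** J = - (J ** Zmat J M)"
proof -
  have "matrix_inv (Cpart J M) ** J = J ** matrix_inv (Cpart J M)"
    using assms Cpart_commute by (rule matrix_inv_commute)
  then show ?thesis
    unfolding Zmat_def
    by (simp add: Dpart_anticommute matrix_neg_right flip: matrix_mul_assoc)
      (simp add: matrix_mul_assoc)
qed

lemma one_add_Delta_matrix_inv:
  "invertible M \<Longrightarrow> mat 1 + Delta J (matrix_inv M) = 2 *\<^sub>R (matrix_inv M ** Cpart J M)"
  by (simp add: Delta_def Cpart_def matrix_inv_inv matrix_inv_left J_simps algebra_simps)

lemma one_diff_Delta_matrix_inv: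
  "invertible M \<Longrightarrow> mat 1 - Delta J (matrix_inv M) = 2 *\<^sub>R (matrix_inv M ** Dpart J M)"
  by (simp add: Delta_def Dpart_def matrix_inv_inv matrix_inv_left J_simps algebra_simps)

lemma invertible_one_add_Delta_matrix_inv:
  assumes "invertible M" and "invertible (Cpart J M)"
  shows "invertible (mat 1 + Delta J (matrix_inv M))"
  unfolding one_add_Delta_matrix_inv[OF assms(1)]
  by (intro scalar_invertible invertible_mult invertible_matrix_inv assms) simp

lemma Zmat_eq_Cayley_Delta:
  assumes "invertible M" and "invertible (Cpart J M)"
  shows "Zmat J M = matrix_inv (mat 1 + Delta J (matrix_inv M)) ** (mat 1 - Delta J (matrix_inv M))"
proof -
  have "matrix_inv (mat 1 + Delta J (matrix_inv M)) = (1/2) *\<^sub>R (matrix_inv (Cpart J M) ** M)"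
    by (simp add: one_add_Delta_matrix_inv matrix_inv_scaleR matrix_inv_mult matrix_inv_inv
        invertible_mult invertible_matrix_inv assms)
  then show ?thesis
    by (simp add: Zmat_def one_diff_Delta_matrix_inv assms(1) matrix_inv_right matrix_ring_simps)
      (simp add: matrix_mul_assoc assms(1) matrix_inv_right)
qed

context
  fixes M N :: "real^'m^'m"
  assumes inverse: "N ** M = mat 1"
begin

lemma Cpart_mult_of_inverse:
  "Cpart J N ** Cpart J M + Dpart J N ** Dpart J M = mat 1"
  using Cpart_mult[of N M] by (simp add: inverse Cpart_mat_1)

lemma Dpart_mult_of_inverse: "Cpart J N ** Dpart J M = - (Dpart J N ** Cpart J M)"
  using Dpart_mult[of N M] by (simp add: inverse Dpart_mat_1 eq_neg_iff_add_eq_0)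

lemma Cpart_mult_one_diff_Zmat_square:
  assumes "invertible (Cpart J M)"
  shows "Cpart J N ** Cpart J M ** (mat 1 - Zmat J M ** Zmat J M) = mat 1"
proof -
  let ?C = "Cpart J M" and ?D = "Dpart J M"
  have "Cpart J N ** ?C ** (mat 1 - Zmat J M ** Zmat J M)
      = Cpart J N ** ?C - Cpart J N ** (?C ** matrix_inv ?C) ** ?D ** matrix_inv ?C ** ?D"
    by (simp add: Zmat_def matrix_diff_ldistrib matrix_mul_assoc)
  also have "\<dots> = Cpart J N ** ?C + Dpart J N ** ?D"
    by (simp add: assms matrix_inv_right Dpart_mult_of_inverse matrix_neg_left)
      (simp add: assms matrix_inv_right flip: matrix_mul_assoc)
  finally show ?thesis
    by (simp add: Cpart_mult_of_inverse)
qed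

lemma Zmat_inverse_mult_Cpart:
  assumes "invertible (Cpart J M)" and "invertible (Cpart J N)"
  shows "Zmat J N ** Cpart J M = - (Cpart J M ** Zmat J M)"
proof -
  have "Zmat J N ** Cpart J M = - (matrix_inv (Cpart J N) ** Cpart J N ** Dpart J M)"
    by (simp add: Zmat_def Dpart_mult_of_inverse matrix_neg_right flip: matrix_mul_assoc)
  also have "\<dots> = - (Cpart J M ** Zmat J M)"
    by (simp add: Zmat_def assms matrix_inv_left matrix_inv_right matrix_mul_assoc)
  finally show ?thesis .
qed

end

end

lemma Omega_square: "(Omega :: real^('n::finite + 'n)^('n + 'n)) ** Omega = - mat 1"
  unfolding Omega_def matrix_matrix_mult_def mat_def
  apply (simp add: vec_eq_iff UNIV_Plus_UNIV[symmetric] sum.Plus del: UNIV_Plus_UNIV)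
  apply (intro allI)
  subgoal for i j by (cases i; cases j) (auto simp: if_distrib if_distribR cong: if_cong)
  done

lemma symplectic_invertible:
  assumes "symplectic M"
  shows "invertible M"
proof -
  have "M ** (Omega ** transpose M ** (- Omega)) = Omega ** (- Omega)"
    using assms by (simp add: symplectic_def matrix_mul_assoc)
  also have "\<dots> = mat 1"
    by (simp add: matrix_neg_right Omega_square)
  finally show ?thesis
    using invertible_right_inverse by blast
qed

lemma special_orthogonal_invertible: "special_orthogonal M \<Longrightarrow> invertible M"
  unfolding special_orthogonal_def orthogonal_matrix using invertible_left_inverse by blast

theorem lemma2:
  fixes M J :: "real ^ ('n::finite + 'n) ^ ('n + 'n)"
  assumes group_case: "(symplectic M \<and> bosonic_J J) \<or> (special_orthogonal M \<and> fermionic_J J)"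
    and CM: "invertible (Cpart J M)"
    and CMi: "invertible (Cpart J (matrix_inv M))"
  shows "invertible (mat 1 + Delta J (matrix_inv M)) \<and>
         Zmat J M = matrix_inv (mat 1 + Delta J (matrix_inv M)) ** (mat 1 - Delta J (matrix_inv M)) \<and>
         Zmat J M ** J = - (J ** Zmat J M) \<and>
         M = Cpart J M ** (mat 1 + Zmat J M) \<and>
         mat 1 = Cpart J (matrix_inv M) ** Cpart J M ** (mat 1 - Zmat J M ** Zmat J M) \<and>
         Zmat J (matrix_inv M) ** Cpart J M = - (Cpart J M ** Zmat J M)"
proof -
  have J_square: "J ** J = - mat 1"
    using group_case by (auto simp: bosonic_J_def fermionic_J_def)
  have "invertible M"
    using group_case symplectic_invertible special_orthogonal_invertible by blast
  then have inverse: "matrix_inv M ** M = mat 1"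
    by (rule matrix_inv_left)
  show ?thesis
    using invertible_one_add_Delta_matrix_inv[OF J_square \<open>invertible M\<close> CM]
      Zmat_eq_Cayley_Delta[OF J_square \<open>invertible M\<close> CM]
      Zmat_anticommute[OF J_square CM]
      Cpart_mult_one_add_Zmat[OF CM]
      Cpart_mult_one_diff_Zmat_square[OF J_square inverse CM]
      Zmat_inverse_mult_Cpart[OF J_square inverse CM CMi]
    by simp
qed

end
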